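(* Let $n\ge2$, $\tau\in[n-1]$, $\mu_{\mathrm{L}},\mu_{\mathrm{R}}\in\mathbb{R}$, $\eta=\tau/n$, and $\boldsymbol{\mu}\in\mathbb{R}^n$ with $\mu_i=\mu_{\mathrm{L}}\mathbb{1}\{i\le\tau\}+\mu_{\mathrm{R}}\mathbb{1}\{i>\tau\}$. Let $T'=\{t_0\in\mathbb{Z}^+:|t_0-\tau|\le\min(\tau,n-\tau)/2\}$. Then $$\min_{t_0\in T'}|\boldsymbol{v}_{t_0}^\top\boldsymbol{\mu}|\ge\frac{\sqrt3}{3}|\mu_{\mathrm{L}}-\mu_{\mathrm{R}}|\sqrt{n\eta(1-\eta)}.$$
   Context: For $t\in[n-1]$, $\boldsymbol{v}_t=\bigl(\sqrt{\tfrac{n-t}{tn}}\boldsymbol{1}_t^\top,\,-\sqrt{\tfrac{t}{(n-t)n}}\boldsymbol{1}_{n-t}^\top\bigr)^\top\in\mathbb{R}^n$, where $\boldsymbol{1}_k$ is the all-ones vector of length $k$. *)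

theory Defs
  imports Complex_Main
begin

definition cusum_vec :: "nat \<Rightarrow> nat \<Rightarrow> nat \<Rightarrow> real" where
  "cusum_vec n t i =
     (if i \<le> t then sqrt (real (n - t) / (real t * real n))
      else - sqrt (real t / (real (n - t) * real n)))"

end

theory Submission
  imports Defs
begin

text \<open>For a single change point at \<open>\<tau>\<close> the contrast \<open>v\<^sub>t\<^sup>T \<mu>\<close> is explicit: it equals
  \<open>(\<mu>L - \<mu>R) (n - \<tau>) sqrt (t / ((n - t) n))\<close> for \<open>t \<le> \<tau>\<close> and
  \<open>(\<mu>L - \<mu>R) \<tau> sqrt ((n - t) / (t n))\<close> for \<open>t \<ge> \<tau>\<close>.  After squaring, the claimed bound
  \<open>(\<mu>L - \<mu>R)\<^sup>2 \<tau> (n - \<tau>) / (3 n)\<close> becomes the linear inequality \<open>\<tau> (n - t) \<le> 3 t (n - \<tau>)\<close>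
  (and its mirror image under \<open>t \<mapsto> n - t\<close>, \<open>\<tau> \<mapsto> n - \<tau>\<close>), which holds as soon as
  \<open>|t - \<tau>| \<le> min \<tau> (n - \<tau>) / 2\<close>.\<close>

lemma mult_sqrt_divide_swap:
  fixes a b c :: real
  assumes "a > 0" "b > 0" "c > 0"
  shows "b * sqrt (a / (b * c)) = a * sqrt (b / (a * c))"
proof -
  have "a / (b * c) = (a / b)\<^sup>2 * (b / (a * c))"
    using assms by (simp add: field_simps power2_eq_square)
  then have "sqrt (a / (b * c)) = sqrt ((a / b)\<^sup>2) * sqrt (b / (a * c))"
    by (simp only: real_sqrt_mult)
  also have "sqrt ((a / b)\<^sup>2) = a / b"
    using assms by simp
  finally show ?thesis
    using assms by (simp add: field_simps)
qed

lemma sum_atLeastAtMost_split3: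
  fixes f :: "nat \<Rightarrow> 'a::comm_monoid_add"
  assumes "a \<le> b" "b \<le> n"
  shows "(\<Sum>i=1..n. f i) = (\<Sum>i=1..a. f i) + (\<Sum>i\<in>{a<..b}. f i) + (\<Sum>i\<in>{b<..n}. f i)"
proof -
  have "{1..n} = {1..a} \<union> {a<..b} \<union> {b<..n}"
    using assms by auto
  moreover have "{1..a} \<inter> {a<..b} = {}" "({1..a} \<union> {a<..b}) \<inter> {b<..n} = {}"
    using assms by auto
  ultimately show ?thesis
    by (simp add: sum.union_disjoint)
qed

lemma cusum_vec_weights_balance:
  assumes "1 \<le> t" "t < n"
  shows "real t * sqrt (real (n - t) / (real t * real n))
       = real (n - t) * sqrt (real t / (real (n - t) * real n))"
  using mult_sqrt_divide_swap[of "real (n - t)" "real t" "real n"] assms by simp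

lemma sum_cusum_vec_step_left:
  assumes "1 \<le> t" "t \<le> \<tau>" "\<tau> < n"
  shows "(\<Sum>i=1..n. cusum_vec n t i * (if i \<le> \<tau> then L else R))
       = (L - R) * real (n - \<tau>) * sqrt (real t / (real (n - t) * real n))"
proof -
  define p where "p = sqrt (real (n - t) / (real t * real n))"
  define q where "q = sqrt (real t / (real (n - t) * real n))"
  have "(\<Sum>i=1..n. cusum_vec n t i * (if i \<le> \<tau> then L else R))
      = (\<Sum>i=1..t. p * L) + (\<Sum>i\<in>{t<..\<tau>}. - q * L) + (\<Sum>i\<in>{\<tau><..n}. - q * R)"
    using assms unfolding p_def q_def
    by (subst sum_atLeastAtMost_split3[of t \<tau>])
       (auto simp: cusum_vec_def intro!: sum.cong arg_cong2[where f = "(+)"])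
  also have "\<dots> = real t * p * L - real (\<tau> - t) * q * L - real (n - \<tau>) * q * R"
    by simp
  also have "real t * p = real (n - t) * q"
    unfolding p_def q_def using cusum_vec_weights_balance assms by simp
  finally show ?thesis
    using assms unfolding q_def by (simp add: of_nat_diff algebra_simps)
qed

lemma sum_cusum_vec_step_right:
  assumes "1 \<le> \<tau>" "\<tau> \<le> t" "t < n"
  shows "(\<Sum>i=1..n. cusum_vec n t i * (if i \<le> \<tau> then L else R))
       = (L - R) * real \<tau> * sqrt (real (n - t) / (real t * real n))"
proof -
  define p where "p = sqrt (real (n - t) / (real t * real n))"
  define q where "q = sqrt (real t / (real (n - t) * real n))"
  have "(\<Sum>i=1..n. cusum_vec n t i * (if i \<le> \<tau> then L else R))
      = (\<Sum>i=1..\<tau>. p * L) + (\<Sum>i\<in>{\<tau><..t}. p * R) + (\<Sum>i\<in>{t<..n}. - q * R)"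
    using assms unfolding p_def q_def
    by (subst sum_atLeastAtMost_split3[of \<tau> t])
       (auto simp: cusum_vec_def intro!: sum.cong arg_cong2[where f = "(+)"])
  also have "\<dots> = real \<tau> * p * L + real (t - \<tau>) * p * R - real (n - t) * q * R"
    by simp
  also have "real (n - t) * q = real t * p"
    unfolding p_def q_def using cusum_vec_weights_balance assms by simp
  finally show ?thesis
    using assms unfolding p_def by (simp add: of_nat_diff algebra_simps)
qed

lemma window_linear_ineq:
  fixes t T N :: real
  assumes "0 \<le> T" "T \<le> N" "T \<le> 2 * t" "3 * T - N \<le> 2 * t"
  shows "T * (N - t) \<le> 3 * t * (N - T)"
proof -
  have "3 * t * (N - T) - T * (N - t) = 3 / 2 * (N - T) * (2 * t - T) + T / 2 * (2 * t - 3 * T + N)"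
    by (simp add: field_simps)
  moreover have "0 \<le> 3 / 2 * (N - T) * (2 * t - T)" "0 \<le> T / 2 * (2 * t - 3 * T + N)"
    using assms by simp_all
  ultimately show ?thesis
    by linarith
qed

lemma sqrt_third_mult_le_abs:
  fixes c x y :: real
  assumes "0 \<le> x" "c\<^sup>2 * x / 3 \<le> y\<^sup>2"
  shows "sqrt 3 / 3 * \<bar>c\<bar> * sqrt x \<le> \<bar>y\<bar>"
proof -
  have "sqrt 3 / 3 * \<bar>c\<bar> * sqrt x = \<bar>c\<bar> * sqrt x / sqrt 3"
    using real_div_sqrt[of 3] by (simp add: field_simps)
  also have "\<dots> = sqrt (c\<^sup>2 * x / 3)"
    by (simp add: real_sqrt_mult real_sqrt_divide)
  also have "\<dots> \<le> \<bar>y\<bar>"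
    using assms by (intro real_le_lsqrt) simp_all
  finally show ?thesis .
qed

lemma cusum_step_contrast_sq_ge:
  assumes "1 \<le> t" "1 \<le> \<tau>" "\<tau> < n"
    and window: "\<bar>real t - real \<tau>\<bar> \<le> real (min \<tau> (n - \<tau>)) / 2"
  shows "(L - R)\<^sup>2 * (real \<tau> * (real n - real \<tau>) / real n) / 3
       \<le> (\<Sum>i=1..n. cusum_vec n t i * (if i \<le> \<tau> then L else R))\<^sup>2"
proof -
  have "real (min \<tau> (n - \<tau>)) \<le> real \<tau>" "real (min \<tau> (n - \<tau>)) \<le> real n - real \<tau>"
    using assms by (simp_all add: of_nat_diff)
  with window have window':
    "2 * real t \<ge> 3 * real \<tau> - real n" "2 * real t \<ge> real \<tau>"
    "2 * real t \<le> real n + real \<tau>" "2 * real t \<le> 3 * real \<tau>"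
    by linarith+
  have "t < n"
    using window' \<open>\<tau> < n\<close> by linarith
  show ?thesis
  proof (cases "t \<le> \<tau>")
    case True
    have "real \<tau> * (real n - real t) \<le> 3 * real t * (real n - real \<tau>)"
      using window' \<open>\<tau> < n\<close> by (intro window_linear_ineq) simp_all
    then have bound: "real \<tau> * (real n - real \<tau>) / real n / 3
        \<le> (real n - real \<tau>)\<^sup>2 * (real t / ((real n - real t) * real n))"
      using \<open>t < n\<close> \<open>\<tau> < n\<close> by (simp add: divide_simps power2_eq_square) (simp add: algebra_simps)
    have "(\<Sum>i=1..n. cusum_vec n t i * (if i \<le> \<tau> then L else R))\<^sup>2
        = (L - R)\<^sup>2 * ((real n - real \<tau>)\<^sup>2 * (real t / ((real n - real t) * real n)))"
      using \<open>t < n\<close> \<open>\<tau> < n\<close>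
      unfolding sum_cusum_vec_step_left[OF \<open>1 \<le> t\<close> True \<open>\<tau> < n\<close>]
      by (simp add: power_mult_distrib of_nat_diff)
    with mult_left_mono[OF bound zero_le_power2[of "L - R"]] show ?thesis
      by simp
  next
    case False
    then have "\<tau> \<le> t"
      by simp
    have "(real n - real \<tau>) * (real n - (real n - real t))
        \<le> 3 * (real n - real t) * (real n - (real n - real \<tau>))"
      using window' \<open>t < n\<close> by (intro window_linear_ineq) simp_all
    then have bound: "real \<tau> * (real n - real \<tau>) / real n / 3
        \<le> (real \<tau>)\<^sup>2 * ((real n - real t) / (real t * real n))"
      using assms by (simp add: divide_simps power2_eq_square) (simp add: algebra_simps)
    have "(\<Sum>i=1..n. cusum_vec n t i * (if i \<le> \<tau> then L else R))\<^sup>2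
        = (L - R)\<^sup>2 * ((real \<tau>)\<^sup>2 * ((real n - real t) / (real t * real n)))"
      using \<open>t < n\<close>
      unfolding sum_cusum_vec_step_right[OF \<open>1 \<le> \<tau>\<close> \<open>\<tau> \<le> t\<close> \<open>t < n\<close>]
      by (simp add: power_mult_distrib of_nat_diff)
    with mult_left_mono[OF bound zero_le_power2[of "L - R"]] show ?thesis
      by simp
  qed
qed

theorem lemmaA1:
  fixes n \<tau> :: nat and \<mu>L \<mu>R :: real
  assumes "n \<ge> 2" and "1 \<le> \<tau>" and "\<tau> \<le> n - 1"
  defines "\<eta> \<equiv> real \<tau> / real n"
    and "\<mu> \<equiv> (\<lambda>i::nat. if i \<le> \<tau> then \<mu>L else \<mu>R)"
    and "T' \<equiv> {t0::nat. 1 \<le> t0 \<and> \<bar>real t0 - real \<tau>\<bar> \<le> real (min \<tau> (n - \<tau>)) / 2}"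
  shows "Min ((\<lambda>t0. \<bar>\<Sum>i=1..n. cusum_vec n t0 i * \<mu> i\<bar>) ` T')
           \<ge> sqrt 3 / 3 * \<bar>\<mu>L - \<mu>R\<bar> * sqrt (real n * \<eta> * (1 - \<eta>))"
proof -
  have "\<tau> < n"
    using assms(1,3) by linarith
  then have \<eta>_eq: "real n * \<eta> * (1 - \<eta>) = real \<tau> * (real n - real \<tau>) / real n"
    unfolding \<eta>_def by (simp add: field_simps)
  have "T' \<subseteq> {..n}"
  proof
    fix t
    assume "t \<in> T'"
    then have "\<bar>real t - real \<tau>\<bar> \<le> real (min \<tau> (n - \<tau>)) / 2"
      unfolding T'_def by simp
    moreover have "real (min \<tau> (n - \<tau>)) \<le> real n - real \<tau>"
      using \<open>\<tau> < n\<close> by simp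
    ultimately have "real t \<le> real n"
      by linarith
    then show "t \<in> {..n}"
      by simp
  qed
  then have "finite T'"
    by (rule finite_subset) simp
  moreover have "\<tau> \<in> T'"
    using assms(2) unfolding T'_def by simp
  moreover have "sqrt 3 / 3 * \<bar>\<mu>L - \<mu>R\<bar> * sqrt (real n * \<eta> * (1 - \<eta>))
      \<le> \<bar>\<Sum>i=1..n. cusum_vec n t i * \<mu> i\<bar>" if "t \<in> T'" for t
    unfolding \<eta>_eq \<mu>_def
    using that assms(2) \<open>\<tau> < n\<close> unfolding T'_def
    by (intro sqrt_third_mult_le_abs cusum_step_contrast_sq_ge) simp_all
  ultimately show ?thesis
    by (subst Min_ge_iff) auto
qed

end
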